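(* Let $p$ be a prime. Then $\mathcal{M}_p^{(0)}=\{n\in\{1,2,6,42,1806\} : p\equiv 1\pmod{n}\}$.
   Context: For positive integers $k,n$ let $S_k(n)=\sum_{i=1}^{n} i^k$. For an integer $a$, $\mathcal{M}_a$ denotes the set of positive integers $n$ such that $S_n(n)\equiv a\pmod{n}$ (it is known that $\mathcal{M}_1=\{1,2,6,42,1806\}$). For a prime $p$, $\mathcal{M}_p^{(0)}=\{n\in\mathcal{M}_p : p\nmid n\}$. *)

theory Defs
  imports "HOL-Number_Theory.Number_Theory"
begin

definition S :: "nat \<Rightarrow> nat \<Rightarrow> int" where
  "S k n = (\<Sum>i = 1..n. int i ^ k)"

definition M :: "int \<Rightarrow> nat set" where
  "M a = {n. n > 0 \<and> [S n n = a] (mod int n)}"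

definition M0 :: "nat \<Rightarrow> nat set" where
  "M0 p = {n \<in> M (int p). \<not> p dvd n}"

end

theory Submission
  imports Defs "HOL-Computational_Algebra.Squarefree"
begin

(* For a prime q dividing n, the sum S_k(n) splits into n/q blocks of length q, so
   S_k(n) = (n/q) S_k(q), which is -(n/q) or 0 modulo q according as q - 1 divides k or not.
   Hence if S_n(n) = a (mod n) with a coprime to n, then n is squarefree and q - 1 divides n
   for every prime q dividing n.  Removing the largest prime factor and inducting shows that
   such n lie on the chain 1, 2, 6 = 2 * 3, 42 = 6 * 7, 1806 = 42 * 43, which stops because
   1807 = 13 * 139 is composite.  Conversely S_n(n) = 1 (mod n) for these n, so for p not
   dividing n we get n in M_p exactly when p = 1 (mod n). *)

lemma sum_power_cong_prime:
  fixes q k :: nat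
  assumes q: "prime q"
  shows "[(\<Sum>j\<in>{0<..<q}. int j ^ k) = (if (q - 1) dvd k then -1 else 0)] (mod int q)"
proof -
  have "q > 1" using q prime_gt_1_nat by blast
  obtain g where g: "residue_primroot q g"
    using prime_primitive_root_exists[OF \<open>q > 1\<close> q] by blast
  \<comment> \<open>The nonzero residues are the powers of g, so the sum is a geometric series in g^k.\<close>
  have "bij_betw (\<lambda>i. g ^ i mod q) {..<q - 1} {0<..<q}"
    using residue_primroot_is_generator[OF \<open>q > 1\<close> g] q
    by (simp add: totient_prime totatives_prime)
  then have "(\<Sum>j\<in>{0<..<q}. int j ^ k) = (\<Sum>i<q - 1. int (g ^ i mod q) ^ k)"
    by (simp add: sum.reindex_bij_betw[of _ _ _ "\<lambda>j. int j ^ k", symmetric])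
  also have "[\<dots> = (\<Sum>i<q - 1. (int g ^ k) ^ i)] (mod int q)"
  proof (intro cong_sum)
    fix i
    have "[int (g ^ i mod q) = int g ^ i] (mod int q)"
      by (simp add: of_nat_mod cong_def mod_mod_trivial)
    from cong_pow[OF this, of k] show "[int (g ^ i mod q) ^ k = (int g ^ k) ^ i] (mod int q)"
      by (simp add: ac_simps flip: power_mult)
  qed
  finally have sum_cong:
    "[(\<Sum>j\<in>{0<..<q}. int j ^ k) = (\<Sum>i<q - 1. (int g ^ k) ^ i)] (mod int q)" .
  have ord_g: "ord q g = q - 1"
    using g q by (simp add: residue_primroot_def totient_prime)
  have root_iff: "[int g ^ k = 1] (mod int q) \<longleftrightarrow> (q - 1) dvd k"
    using ord_divides[of g k q] ord_g by (metis cong_int_iff of_nat_1 of_nat_power)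
  show ?thesis
  proof (cases "(q - 1) dvd k")
    case True
    have "[(\<Sum>i<q - 1. (int g ^ k) ^ i) = (\<Sum>i<q - 1. 1)] (mod int q)"
      using True root_iff by (intro cong_sum) (metis cong_pow power_one)
    also have "(\<Sum>i<q - 1. 1) = int q - 1"
      using \<open>q > 1\<close> by simp
    also have "[int q - 1 = -1] (mod int q)"
      by (simp add: cong_iff_dvd_diff)
    finally show ?thesis
      using sum_cong True by (simp add: cong_trans)
  next
    case False
    define x where "x = int g ^ k"
    have "\<not> q dvd g"
      using g \<open>q > 1\<close> by (auto simp: residue_primroot_def)
    then have "[int g ^ (q - 1) = 1] (mod int q)"
      using fermat_theorem[OF q] by (metis cong_int_iff of_nat_1 of_nat_power)
    then have "[x ^ (q - 1) = 1] (mod int q)"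
      unfolding x_def by (metis cong_pow power_mult mult.commute power_one)
    then have "int q dvd (x - 1) * (\<Sum>i<q - 1. x ^ i)"
      by (simp add: cong_iff_dvd_diff flip: power_diff_1_eq)
    moreover have "\<not> int q dvd x - 1"
      using False root_iff by (simp add: x_def cong_iff_dvd_diff)
    ultimately have "int q dvd (\<Sum>i<q - 1. x ^ i)"
      using q by (simp add: prime_dvd_mult_iff)
    then have "[(\<Sum>i<q - 1. x ^ i) = 0] (mod int q)"
      by (simp add: cong_0_iff)
    with sum_cong False show ?thesis
      unfolding x_def by (simp add: cong_trans)
  qed
qed

lemma S_prime_cong:
  fixes q k :: nat
  assumes q: "prime q" and k: "k > 0"
  shows "[S k q = (if (q - 1) dvd k then -1 else 0)] (mod int q)"
proof -
  have "{1..q} = insert q {0<..<q}"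
    using prime_gt_0_nat[OF q] by auto
  then have "S k q = (\<Sum>j\<in>{0<..<q}. int j ^ k) + int q ^ k"
    by (simp add: S_def add.commute)
  moreover have q_power: "[int q ^ k = 0] (mod int q)"
    using k by (simp add: cong_0_iff)
  ultimately show ?thesis
    using cong_add[OF sum_power_cong_prime[OF q] q_power] by simp
qed

lemma S_mult_cong: "[S k (m * q) = int m * S k q] (mod int q)"
proof (induction m)
  case 0
  then show ?case by (simp add: S_def)
next
  case (Suc m)
  have "S k (Suc m * q) = S k (m * q) + (\<Sum>i\<in>{1 + m * q..q + m * q}. int i ^ k)"
    unfolding S_def using sum.ub_add_nat[of 1 "m * q" "\<lambda>i. int i ^ k" q]
    by (simp add: add.commute)
  also have "(\<Sum>i\<in>{1 + m * q..q + m * q}. int i ^ k) = (\<Sum>i=1..q. int (i + m * q) ^ k)"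
    by (rule sum.shift_bounds_cl_nat_ivl)
  finally have split: "S k (Suc m * q) = S k (m * q) + (\<Sum>i=1..q. int (i + m * q) ^ k)" .
  have shift: "[(\<Sum>i=1..q. int (i + m * q) ^ k) = S k q] (mod int q)"
    unfolding S_def by (intro cong_sum cong_pow) (simp add: cong_iff_dvd_diff)
  show ?case
    using cong_add[OF Suc.IH shift] unfolding split by (simp add: ring_distribs add.commute)
qed

lemma S_cong_prime_divisor:
  fixes q k n :: nat
  assumes q: "prime q" and "q dvd n" and "k > 0"
  shows "[S k n = (if (q - 1) dvd k then - int (n div q) else 0)] (mod int q)"
proof -
  have "[S k n = int (n div q) * S k q] (mod int q)"
    using S_mult_cong[of k "n div q" q] \<open>q dvd n\<close> by simp
  also have "[int (n div q) * S k q = int (n div q) * (if (q - 1) dvd k then -1 else 0)] (mod int q)"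
    by (intro cong_mult cong_refl S_prime_cong q \<open>k > 0\<close>)
  finally show ?thesis
    by (cases "(q - 1) dvd k") simp_all
qed

lemma squarefree_dvdI:
  fixes n a :: "'a :: factorial_semiring"
  assumes "squarefree n" and "\<And>q. prime q \<Longrightarrow> q dvd n \<Longrightarrow> q dvd a"
  shows "n dvd a"
proof (cases "a = 0")
  case False
  have "n \<noteq> 0" using assms(1) by auto
  then show ?thesis
  proof (rule multiplicity_le_imp_dvd)
    fix q :: 'a assume q: "prime q"
    show "multiplicity q n \<le> multiplicity q a"
    proof (cases "q dvd n")
      case True
      have "multiplicity q n \<le> 1"
        using assms(1) q squarefree_factorial_semiring''[OF \<open>n \<noteq> 0\<close>] by blast
      moreover have "multiplicity q a > 0"
        using assms(2)[OF q True] prime_multiplicity_gt_zero_iff[OF prime_imp_prime_elem[OF q] False]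
        by blast
      ultimately show ?thesis by linarith
    qed (simp add: not_dvd_imp_multiplicity_0)
  qed
qed simp

lemma squarefree_congI:
  fixes n :: nat and x y :: int
  assumes "squarefree n" and "\<And>q. prime q \<Longrightarrow> q dvd n \<Longrightarrow> [x = y] (mod int q)"
  shows "[x = y] (mod int n)"
proof -
  have "n dvd nat \<bar>x - y\<bar>"
  proof (rule squarefree_dvdI[OF assms(1)])
    fix q :: nat assume "prime q" "q dvd n"
    then show "q dvd nat \<bar>x - y\<bar>"
      using assms(2) by (simp add: cong_iff_dvd_diff)
  qed
  then show ?thesis
    by (simp add: cong_iff_dvd_diff)
qed

lemma dvd_prime_mult_imp_mem:
  fixes r m d :: nat
  assumes "prime r" and "\<And>e. e dvd m \<Longrightarrow> e \<in> D" and "d dvd r * m"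
  shows "d \<in> D \<union> (*) r ` D"
proof -
  obtain x y where "d = x * y" "x dvd r" "y dvd m"
    using dvd_productE[OF assms(3)] .
  with assms(1,2) show ?thesis
    by (auto simp: prime_nat_iff)
qed

lemma divisors_1806:
  fixes d :: nat
  assumes "d dvd 1806"
  shows "d \<in> {1, 2, 3, 6, 7, 14, 21, 42, 43, 86, 129, 258, 301, 602, 903, 1806}"
proof -
  have "e dvd 43 \<Longrightarrow> e \<in> {1, 43}" for e :: nat
    using dvd_prime_mult_imp_mem[of 43 1 "{1}" e] by auto
  then have "e dvd 301 \<Longrightarrow> e \<in> {1, 43, 7, 301}" for e :: nat
    using dvd_prime_mult_imp_mem[of 7 43 "{1, 43}" e] by auto
  then have "e dvd 903 \<Longrightarrow> e \<in> {1, 43, 7, 301, 3, 129, 21, 903}" for e :: nat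
    using dvd_prime_mult_imp_mem[of 3 301 "{1, 43, 7, 301}" e] by auto
  then show ?thesis
    using dvd_prime_mult_imp_mem[of 2 903 "{1, 43, 7, 301, 3, 129, 21, 903}" d] assms by auto
qed

lemma prime_dvd_1806:
  fixes q :: nat
  assumes "prime q" and "q dvd 1806"
  shows "q \<in> {2, 3, 7, 43}"
proof -
  have "q dvd 2 * (3 * (7 * 43))" using assms(2) by simp
  then have "q dvd 2 \<or> q dvd 3 \<or> q dvd 7 \<or> q dvd 43"
    using assms(1) by (simp only: prime_dvd_mult_iff)
  then show ?thesis
    using assms(1) primes_dvd_imp_eq[of q 2] primes_dvd_imp_eq[of q 3] primes_dvd_imp_eq[of q 7]
      primes_dvd_imp_eq[of q 43] by auto
qed

lemma prime_pred_dvd_1806: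
  fixes q :: nat
  assumes "prime q" and "(q - 1) dvd 1806"
  shows "q \<in> {2, 3, 7, 43}"
proof -
  have "q = (q - 1) + 1" using prime_gt_0_nat[OF assms(1)] by simp
  then have "q \<in> {2, 3, 7, 43, 2 * 2, 2 * 4, 3 * 5, 2 * 11, 2 * 22, 3 * 29, 2 * 65, 7 * 37,
      2 * 151, 3 * 201, 2 * 452, 13 * 139}"
    using divisors_1806[OF assms(2)] by auto
  then show ?thesis
    using assms(1) prime_product[of 2 2] prime_product[of 2 4] prime_product[of 3 5]
      prime_product[of 2 11] prime_product[of 2 22] prime_product[of 3 29] prime_product[of 2 65]
      prime_product[of 7 37] prime_product[of 2 151] prime_product[of 3 201]
      prime_product[of 2 452] prime_product[of 13 139]
    by (auto simp del: prime_nat_numeral_eq)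
qed

lemma squarefree_1806: "squarefree (1806 :: nat)"
proof (subst squarefree_factorial_semiring, simp, intro allI impI notI)
  fix q :: nat assume "prime q" "q ^ 2 dvd 1806"
  then have "q \<in> {2, 3, 7, 43}"
    by (intro prime_dvd_1806) (auto simp: power2_eq_square dest: dvd_mult_left)
  with \<open>q ^ 2 dvd 1806\<close> show False by auto
qed

lemma prime_pred_dvd_closed_step:
  fixes m q :: nat
  assumes "m \<in> {1, 2, 6, 42, 1806}" and "prime q" and "(q - 1) dvd m" and "\<not> q dvd m"
  shows "m * q \<in> {1, 2, 6, 42, 1806}"
proof -
  have "m dvd 1806" using assms(1) by auto
  then have "q \<in> {2, 3, 7, 43}"
    using assms(2,3) by (intro prime_pred_dvd_1806) (auto intro: dvd_trans)
  then show ?thesis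
    using assms(1,3,4) by auto
qed

lemma prime_pred_dvd_div_max_prime:
  fixes n q :: nat
  assumes sf: "squarefree n" and closed: "\<And>r. prime r \<Longrightarrow> r dvd n \<Longrightarrow> (r - 1) dvd n"
    and q: "prime q" "q dvd n" and q_max: "\<And>r. prime r \<Longrightarrow> r dvd n \<Longrightarrow> r \<le> q"
  shows "squarefree (n div q)" and "\<not> q dvd n div q" and "(q - 1) dvd n div q"
    and "\<And>r. prime r \<Longrightarrow> r dvd n div q \<Longrightarrow> (r - 1) dvd n div q"
proof -
  define m where "m = n div q"
  have n_eq: "n = m * q" using q(2) by (simp add: m_def)
  show "squarefree (n div q)"
    using sf unfolding m_def[symmetric] by (rule squarefree_mono[rotated]) (simp add: n_eq)
  have "\<not> q dvd m"
  proof
    assume "q dvd m"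
    then have "q ^ 2 dvd n" by (simp add: n_eq power2_eq_square)
    then have "q dvd 1" by (rule squarefreeD[OF sf])
    with q(1) show False by simp
  qed
  then show "\<not> q dvd n div q" by (simp add: m_def)
  have cancel: "d dvd m" if "0 < d" "d < q" "d dvd n" for d
  proof -
    have "coprime d q"
      using that q(1) by (metis coprime_commute dvd_imp_le not_le prime_imp_coprime)
    then show ?thesis
      using \<open>d dvd n\<close> by (simp add: n_eq coprime_dvd_mult_left_iff)
  qed
  show "(q - 1) dvd n div q"
    using cancel closed q prime_gt_1_nat[OF q(1)] by (simp add: m_def)
  show "(r - 1) dvd n div q" if r: "prime r" "r dvd n div q" for r
  proof -
    have "r dvd m" using r(2) by (simp add: m_def)
    then have "r dvd n" and "r \<noteq> q"
      using \<open>\<not> q dvd m\<close> by (auto simp: n_eq)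
    then have "r < q"
      using q_max[OF r(1)] by simp
    then show ?thesis
      using cancel closed r(1) \<open>r dvd n\<close> prime_gt_1_nat[OF r(1)] by (simp add: m_def)
  qed
qed

lemma squarefree_prime_pred_dvd_cases:
  fixes n :: nat
  assumes "squarefree n" and "\<And>q. prime q \<Longrightarrow> q dvd n \<Longrightarrow> (q - 1) dvd n"
  shows "n \<in> {1, 2, 6, 42, 1806}"
  using assms
proof (induction n rule: less_induct)
  case (less n)
  have "n \<noteq> 0" using less.prems(1) by (metis not_squarefree_0)
  show ?case
  proof (cases "n = 1")
    case False
    define q where "q = Max (prime_factors n)"
    have "prime_factors n \<noteq> {}"
      using \<open>n \<noteq> 0\<close> False by (simp add: prime_factorization_empty_iff)
    then have q: "prime q" "q dvd n"
      using Max_in[of "prime_factors n"] by (auto simp: q_def in_prime_factors_iff)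
    have q_max: "r \<le> q" if "prime r" "r dvd n" for r
      using that \<open>n \<noteq> 0\<close> by (auto simp: q_def in_prime_factors_iff intro!: Max_ge)
    note div_q = prime_pred_dvd_div_max_prime[where n = n and q = q, OF less.prems q q_max]
    have "n div q < n"
      using \<open>n \<noteq> 0\<close> prime_gt_1_nat[OF q(1)] by simp
    then have "n div q \<in> {1, 2, 6, 42, 1806}"
      using div_q(1,4) by (rule less.IH)
    then have "n div q * q \<in> {1, 2, 6, 42, 1806}"
      using q(1) div_q(3,2) by (rule prime_pred_dvd_closed_step)
    then show ?thesis
      using q(2) by simp
  qed simp
qed

lemma M_coprime_imp_mem:
  assumes "n \<in> M a" and "coprime a (int n)"
  shows "n \<in> {1, 2, 6, 42, 1806}"
proof -
  from assms(1) have "n > 0" and S_cong: "[S n n = a] (mod int n)"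
    by (auto simp: M_def)
  have a_nonzero: "\<not> [a = 0] (mod int q)" if "prime q" "q dvd n" for q
  proof
    assume "[a = 0] (mod int q)"
    then have "int q dvd a" by (simp add: cong_0_iff)
    with assms(2) \<open>q dvd n\<close> have "is_unit (int q)"
      by (meson coprime_common_divisor of_nat_dvd_iff)
    with \<open>prime q\<close> show False by simp
  qed
  have a_cong: "[a = (if (q - 1) dvd n then - int (n div q) else 0)] (mod int q)"
    if "prime q" "q dvd n" for q
  proof -
    have "[S n n = a] (mod int q)"
      using cong_dvd_modulus[OF S_cong] \<open>q dvd n\<close> by simp
    then show ?thesis
      using S_cong_prime_divisor[OF that \<open>n > 0\<close>] by (metis cong_sym cong_trans)
  qed
  have "squarefree n"
  proof (subst squarefree_factorial_semiring)
    show "n \<noteq> 0" using \<open>n > 0\<close> by simp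
    show "\<forall>q. prime q \<longrightarrow> \<not> q ^ 2 dvd n"
    proof (intro allI impI notI)
      fix q :: nat assume "prime q" "q ^ 2 dvd n"
      then have "q dvd n" and "int q dvd int (n div q)"
        by (auto simp: power2_eq_square dvd_div_iff_mult intro: dvd_mult_left)
      then have "[(if (q - 1) dvd n then - int (n div q) else 0) = 0] (mod int q)"
        by (simp add: cong_0_iff)
      then show False
        using a_cong a_nonzero \<open>prime q\<close> \<open>q dvd n\<close> cong_trans by blast
    qed
  qed
  moreover have "(q - 1) dvd n" if "prime q" "q dvd n" for q
    using a_cong[OF that] a_nonzero[OF that] by (auto split: if_splits)
  ultimately show ?thesis
    by (rule squarefree_prime_pred_dvd_cases)
qed

lemma S_self_cong_one:
  assumes "n \<in> {1, 2, 6, 42, 1806}"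
  shows "[S n n = 1] (mod int n)"
proof (rule squarefree_congI)
  have "n dvd 1806" using assms by auto
  then show "squarefree n"
    using squarefree_1806 squarefree_mono by blast
  fix q :: nat assume q: "prime q" "q dvd n"
  then have "q \<in> {2, 3, 7, 43}"
    using prime_dvd_1806 \<open>n dvd 1806\<close> dvd_trans by blast
  then have "(q - 1) dvd n" and "[- int (n div q) = 1] (mod int q)"
    using assms q(2) by (auto simp: cong_def)
  moreover have "[S n n = - int (n div q)] (mod int q)"
    using S_cong_prime_divisor[OF q, of n] assms \<open>(q - 1) dvd n\<close> by auto
  ultimately show "[S n n = 1] (mod int q)"
    using cong_trans by blast
qed

theorem mainTheorem3:
  fixes p :: nat
  assumes "prime p"
  shows "M0 p = {n \<in> {1, 2, 6, 42, 1806}. [p = 1] (mod n)}"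
proof (intro Set.set_eqI iffI)
  fix n assume "n \<in> M0 p"
  then have M: "n \<in> M (int p)" and "\<not> p dvd n"
    by (auto simp: M0_def)
  then have "coprime (int p) (int n)"
    using assms by (simp add: prime_imp_coprime)
  with M have L: "n \<in> {1, 2, 6, 42, 1806}"
    by (rule M_coprime_imp_mem)
  have "[int p = 1] (mod int n)"
    using M S_self_cong_one[OF L] by (auto simp: M_def intro: cong_trans cong_sym)
  with L show "n \<in> {n \<in> {1, 2, 6, 42, 1806}. [p = 1] (mod n)}"
    using cong_int_iff[of p 1 n] by simp
next
  fix n assume "n \<in> {n \<in> {1, 2, 6, 42, 1806}. [p = 1] (mod n)}"
  then have L: "n \<in> {1, 2, 6, 42, 1806}" and p_cong: "[p = 1] (mod n)"
    by auto
  have "\<not> p dvd n"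
  proof
    assume "p dvd n"
    with p_cong have "[p = 1] (mod p)" by (rule cong_dvd_modulus_nat)
    with prime_gt_1_nat[OF assms] show False by (simp add: cong_def)
  qed
  moreover have "[S n n = int p] (mod int n)"
    using S_self_cong_one[OF L] p_cong by (metis cong_int_iff cong_sym cong_trans of_nat_1)
  ultimately show "n \<in> M0 p"
    using L by (auto simp: M0_def M_def)
qed

end
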